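(* For every integer $r\ge 0$: \begin{align*} \mathrm{LCD}[6r+3,2] &\ge 4r+2,\\ \mathrm{LCD}[6r+4,2] &\ge 4r+2,\\ \mathrm{LCD}[6r+5,2] &\ge 4r+2,\\ \mathrm{LCD}[6r+6,2] &\ge 4r+3,\\ \mathrm{LCD}[6r+7,2] &\ge 4r+4,\\ \mathrm{LCD}[6r+8,2] &\ge 4r+5. \end{align*}
   Context: All codes are binary linear codes, i.e. subspaces of $\mathbb{F}_2^n$; an $[n,k,d]$ code is one of length $n$, dimension $k$ and minimum Hamming distance $d$. A linear code $C$ is an LCD code if $C\cap C^\perp=\{0\}$, where $C^\perp$ is the dual with respect to the standard dot product. For positive integers $n\ge k$, $\mathrm{LCD}[n,k]$ denotes the largest $d$ such that there exists a binary $[n,k,d]$ LCD code. *)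

theory Defs
  imports "HOL-Library.Z2"
begin

definition F2vec :: "nat \<Rightarrow> (nat \<Rightarrow> bit) set" where
  "F2vec n = {x. \<forall>i\<ge>n. x i = 0}"

definition vzero :: "nat \<Rightarrow> bit" where
  "vzero = (\<lambda>i. 0)"

definition vadd :: "(nat \<Rightarrow> bit) \<Rightarrow> (nat \<Rightarrow> bit) \<Rightarrow> (nat \<Rightarrow> bit)" where
  "vadd x y = (\<lambda>i. x i + y i)"

definition vscale :: "bit \<Rightarrow> (nat \<Rightarrow> bit) \<Rightarrow> (nat \<Rightarrow> bit)" where
  "vscale c x = (\<lambda>i. c * x i)"

definition linear_code :: "nat \<Rightarrow> (nat \<Rightarrow> bit) set \<Rightarrow> bool" where
  "linear_code n C \<longleftrightarrow> C \<subseteq> F2vec n \<and> vzero \<in> C \<and>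
     (\<forall>x\<in>C. \<forall>y\<in>C. vadd x y \<in> C) \<and> (\<forall>c x. x \<in> C \<longrightarrow> vscale c x \<in> C)"

definition lin_comb :: "(nat \<Rightarrow> bit) set \<Rightarrow> ((nat \<Rightarrow> bit) \<Rightarrow> bit) \<Rightarrow> (nat \<Rightarrow> bit)" where
  "lin_comb B c = (\<lambda>i. \<Sum>b\<in>B. c b * b i)"

definition lin_indep :: "(nat \<Rightarrow> bit) set \<Rightarrow> bool" where
  "lin_indep B \<longleftrightarrow> (\<forall>c. lin_comb B c = vzero \<longrightarrow> (\<forall>b\<in>B. c b = 0))"

definition lin_span :: "(nat \<Rightarrow> bit) set \<Rightarrow> (nat \<Rightarrow> bit) set" where
  "lin_span B = {lin_comb B c | c. True}"

definition code_dim :: "(nat \<Rightarrow> bit) set \<Rightarrow> nat \<Rightarrow> bool" where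
  "code_dim C k \<longleftrightarrow> (\<exists>B. finite B \<and> B \<subseteq> C \<and> card B = k \<and> lin_indep B \<and> lin_span B = C)"

definition hweight :: "(nat \<Rightarrow> bit) \<Rightarrow> nat" where
  "hweight x = card {i. x i \<noteq> 0}"

definition hdist :: "(nat \<Rightarrow> bit) \<Rightarrow> (nat \<Rightarrow> bit) \<Rightarrow> nat" where
  "hdist x y = card {i. x i \<noteq> y i}"

definition min_dist :: "(nat \<Rightarrow> bit) set \<Rightarrow> nat" where
  "min_dist C = Min {hdist x y | x y. x \<in> C \<and> y \<in> C \<and> x \<noteq> y}"

definition dotp :: "nat \<Rightarrow> (nat \<Rightarrow> bit) \<Rightarrow> (nat \<Rightarrow> bit) \<Rightarrow> bit" where
  "dotp n x y = (\<Sum>i<n. x i * y i)"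

definition dual_code :: "nat \<Rightarrow> (nat \<Rightarrow> bit) set \<Rightarrow> (nat \<Rightarrow> bit) set" where
  "dual_code n C = {y \<in> F2vec n. \<forall>x\<in>C. dotp n x y = 0}"

definition is_LCD :: "nat \<Rightarrow> (nat \<Rightarrow> bit) set \<Rightarrow> bool" where
  "is_LCD n C \<longleftrightarrow> C \<inter> dual_code n C = {vzero}"

definition LCD_code :: "nat \<Rightarrow> nat \<Rightarrow> nat \<Rightarrow> (nat \<Rightarrow> bit) set \<Rightarrow> bool" where
  "LCD_code n k d C \<longleftrightarrow> linear_code n C \<and> code_dim C k \<and> min_dist C = d \<and> is_LCD n C"

definition LCD :: "nat \<Rightarrow> nat \<Rightarrow> nat" where
  "LCD n k = (GREATEST d. \<exists>C. LCD_code n k d C)"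

end

theory Submission
  imports Defs
begin

(* Split the first a + b + c coordinates into consecutive blocks of lengths a, b, c, and let
   u be 1 exactly on the first and third block and v exactly on the second and third. The
   nonzero words u, v, u + v of their span have weights a + c, b + c, a + b, and the Gram
   matrix of u, v over F_2 is [[a + c, c], [c, b + c]], with determinant ab + bc + ca. When
   this is odd, no nonzero codeword is orthogonal to the whole code, so the code is LCD.
   The triples (a, b, c) = (2r+1, 2r+1, 2r+1), (2r+1, 2r+2, 2r+3), (2r+1, 2r+3, 2r+3) and
   (2r+2, 2r+3, 2r+3), padded with zero coordinates, give the six bounds. *)

lemma of_nat_bit_eq_of_bool_odd: "(of_nat k :: bit) = of_bool (odd k)"
  by (induction k) auto

lemma bit_add_eq_0_iff: "(a :: bit) + b = 0 \<longleftrightarrow> a = b"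
  by (cases a; cases b) simp_all

lemma vscale_0 [simp]: "vscale 0 x = vzero"
  and vscale_1 [simp]: "vscale 1 x = x"
  and vadd_vzero_left [simp]: "vadd vzero x = x"
  and vadd_vzero_right [simp]: "vadd x vzero = x"
  by (simp_all only: vscale_def vadd_def vzero_def mult_zero_left mult_1 add_0 add_0_right)

lemma vadd_eq_vzero_iff: "vadd x y = vzero \<longleftrightarrow> x = y"
  unfolding vadd_def vzero_def fun_eq_iff by (simp only: bit_add_eq_0_iff)

lemma vadd_in_F2vec: "x \<in> F2vec n \<Longrightarrow> y \<in> F2vec n \<Longrightarrow> vadd x y \<in> F2vec n"
  and vscale_in_F2vec: "x \<in> F2vec n \<Longrightarrow> vscale c x \<in> F2vec n"
  by (simp_all add: F2vec_def vadd_def vscale_def)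

lemma hdist_eq_hweight_vadd: "hdist x y = hweight (vadd x y)"
  unfolding hdist_def hweight_def vadd_def by (simp only: bit_add_eq_0_iff)

lemma dotp_commute: "dotp n x y = dotp n y x"
  unfolding dotp_def by (simp only: mult.commute)

lemma dotp_vadd_right: "dotp n z (vadd x y) = dotp n z x + dotp n z y"
  unfolding dotp_def vadd_def by (simp only: distrib_left sum.distrib)

lemma dotp_vscale_right: "dotp n z (vscale c x) = c * dotp n z x"
  unfolding dotp_def vscale_def by (simp only: sum_distrib_left mult.left_commute)

lemma hdist_le_length:
  assumes "x \<in> F2vec n" "y \<in> F2vec n"
  shows "hdist x y \<le> n"
proof -
  have "{i. x i \<noteq> y i} \<subseteq> {..<n}"
    using assms unfolding F2vec_def subset_iff mem_Collect_eq lessThan_iff by (metis not_le)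
  then show ?thesis
    unfolding hdist_def by (metis card_lessThan card_mono finite_lessThan)
qed

(* A code with fewer than two words has min_dist = Min {}, an unspecified number; hence the
   attainable distances are bounded by max n (Min {}) rather than by n. *)
lemma LCD_code_le_LCD:
  assumes "LCD_code n k d C"
  shows "d \<le> LCD n k"
proof -
  have bound: "d' \<le> max n (Min {})" if "LCD_code n k d' C'" for d' C'
  proof -
    let ?D = "{hdist x y | x y. x \<in> C' \<and> y \<in> C' \<and> x \<noteq> y}"
    from that have "C' \<subseteq> F2vec n" and d': "d' = Min ?D"
      unfolding LCD_code_def linear_code_def min_dist_def by (simp_all only: simp_thms)
    from this(1) have D: "?D \<subseteq> {..n}"
      using hdist_le_length by (auto simp only: atMost_iff subset_iff mem_Collect_eq)
    show ?thesis
    proof (cases "?D = {}")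
      case False
      have "finite ?D"
        using D finite_subset by blast
      then have "Min ?D \<in> ?D"
        using False by (rule Min_in)
      then show ?thesis
        using D d' by (simp add: subset_iff le_max_iff_disj)
    qed (simp only: d' max.cobounded2)
  qed
  show ?thesis
    unfolding LCD_def using assms bound by (intro Greatest_le_nat[where b = "max n (Min {})"]) blast+
qed

lemma min_dist_eq_min_weight:
  assumes "linear_code n C"
  shows "min_dist C = Min (hweight ` (C - {vzero}))"
proof -
  have "{hdist x y | x y. x \<in> C \<and> y \<in> C \<and> x \<noteq> y} = hweight ` (C - {vzero})"
  proof (intro equalityI subsetI)
    fix d assume "d \<in> {hdist x y | x y. x \<in> C \<and> y \<in> C \<and> x \<noteq> y}"
    then obtain x y where "x \<in> C" "y \<in> C" "x \<noteq> y" "d = hweight (vadd x y)"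
      by (auto simp: hdist_eq_hweight_vadd)
    then show "d \<in> hweight ` (C - {vzero})"
      using assms by (auto simp: linear_code_def vadd_eq_vzero_iff)
  next
    fix d assume "d \<in> hweight ` (C - {vzero})"
    then obtain z where "z \<in> C" "z \<noteq> vzero" "d = hdist z vzero"
      by (auto simp: hdist_eq_hweight_vadd)
    then show "d \<in> {hdist x y | x y. x \<in> C \<and> y \<in> C \<and> x \<noteq> y}"
      using assms by (auto simp: linear_code_def)
  qed
  then show ?thesis
    by (simp add: min_dist_def)
qed

definition span2 :: "(nat \<Rightarrow> bit) \<Rightarrow> (nat \<Rightarrow> bit) \<Rightarrow> (nat \<Rightarrow> bit) set" where
  "span2 u v = {vadd (vscale \<alpha> u) (vscale \<beta> v) | \<alpha> \<beta>. True}"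

lemma bit_pairs_image:
  fixes g :: "bit \<Rightarrow> bit \<Rightarrow> 'a"
  shows "{g \<alpha> \<beta> | \<alpha> \<beta>. True} = {g 0 0, g 1 0, g 0 1, g 1 1}"
proof (intro equalityI subsetI)
  fix x assume "x \<in> {g \<alpha> \<beta> | \<alpha> \<beta>. True}"
  then obtain \<alpha> \<beta> where "x = g \<alpha> \<beta>"
    by blast
  then show "x \<in> {g 0 0, g 1 0, g 0 1, g 1 1}"
    by (cases \<alpha>; cases \<beta>) simp_all
qed auto

lemma span2_eq: "span2 u v = {vzero, u, v, vadd u v}"
  unfolding span2_def bit_pairs_image by simp

lemma linear_code_span2:
  assumes "u \<in> F2vec n" "v \<in> F2vec n"
  shows "linear_code n (span2 u v)"
  unfolding linear_code_def
proof (intro conjI ballI allI impI)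
  show "span2 u v \<subseteq> F2vec n"
    using assms by (auto simp: span2_def intro: vadd_in_F2vec vscale_in_F2vec)
  show "vzero \<in> span2 u v"
    by (simp add: span2_eq)
  show "vadd x y \<in> span2 u v" if xy: "x \<in> span2 u v" "y \<in> span2 u v" for x y
  proof -
    obtain \<alpha> \<beta> \<alpha>' \<beta>'
      where x_eq: "x = vadd (vscale \<alpha> u) (vscale \<beta> v)" and y_eq: "y = vadd (vscale \<alpha>' u) (vscale \<beta>' v)"
      using xy unfolding span2_def by blast
    have "vadd x y = vadd (vscale (\<alpha> + \<alpha>') u) (vscale (\<beta> + \<beta>') v)"
      unfolding x_eq y_eq vadd_def vscale_def by (simp only: distrib_right add_ac)
    then show ?thesis
      unfolding span2_def by blast
  qed
  show "vscale c x \<in> span2 u v" if x: "x \<in> span2 u v" for c x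
  proof -
    obtain \<alpha> \<beta> where x_eq: "x = vadd (vscale \<alpha> u) (vscale \<beta> v)"
      using x unfolding span2_def by blast
    have "vscale c x = vadd (vscale (c * \<alpha>) u) (vscale (c * \<beta>) v)"
      unfolding x_eq vadd_def vscale_def by (simp only: distrib_left mult.assoc)
    then show ?thesis
      unfolding span2_def by blast
  qed
qed

lemma lin_comb_pair:
  assumes "u \<noteq> v"
  shows "lin_comb {u, v} f = vadd (vscale (f u) u) (vscale (f v) v)"
  unfolding lin_comb_def vadd_def vscale_def by (rule ext, subst sum.insert) (use assms in auto)

lemma code_dim_span2:
  assumes "u \<noteq> vzero" "v \<noteq> vzero" "u \<noteq> v"
  shows "code_dim (span2 u v) 2"
  unfolding code_dim_def
proof (intro exI conjI)
  show "lin_indep {u, v}"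
    unfolding lin_indep_def lin_comb_pair[OF assms(3)]
  proof (intro allI impI ballI)
    fix f w assume zero: "vadd (vscale (f u) u) (vscale (f v) v) = vzero" and "w \<in> {u, v}"
    have "f u = 0 \<and> f v = 0"
      using zero assms by (cases "f u"; cases "f v") (simp_all add: vadd_eq_vzero_iff)
    then show "f w = 0"
      using \<open>w \<in> {u, v}\<close> by auto
  qed
  show "lin_span {u, v} = span2 u v"
    unfolding lin_span_def span2_def lin_comb_pair[OF assms(3)]
  proof (intro equalityI subsetI)
    fix x assume "x \<in> {vadd (vscale \<alpha> u) (vscale \<beta> v) | \<alpha> \<beta>. True}"
    then obtain \<alpha> \<beta> where x: "x = vadd (vscale \<alpha> u) (vscale \<beta> v)"
      by blast
    show "x \<in> {vadd (vscale (f u) u) (vscale (f v) v) | f. True}"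
      using assms(3) by (intro CollectI exI[of _ "\<lambda>w. if w = u then \<alpha> else \<beta>"]) (simp add: x)
  qed blast
qed (use assms(3) in \<open>auto simp: span2_eq\<close>)

(* The left-hand side of the hypothesis is the Gram determinant of u and v over F_2
   (where dotp u v ^ 2 = dotp u v). *)
lemma is_LCD_span2:
  assumes "u \<in> F2vec n" "v \<in> F2vec n"
    and gram: "dotp n u u * dotp n v v + dotp n u v = 1"
  shows "is_LCD n (span2 u v)"
  unfolding is_LCD_def
proof
  show "span2 u v \<inter> dual_code n (span2 u v) \<subseteq> {vzero}"
  proof
    fix x assume x: "x \<in> span2 u v \<inter> dual_code n (span2 u v)"
    then obtain \<alpha> \<beta> where x_eq: "x = vadd (vscale \<alpha> u) (vscale \<beta> v)"
      by (auto simp: span2_def)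
    have "dotp n u x = 0" "dotp n v x = 0"
      using x by (auto simp: dual_code_def span2_eq)
    then have "\<alpha> * dotp n u u + \<beta> * dotp n u v = 0" "\<alpha> * dotp n u v + \<beta> * dotp n v v = 0"
      by (simp_all only: x_eq dotp_vadd_right dotp_vscale_right dotp_commute[of n v u])
    then have "\<alpha> = 0 \<and> \<beta> = 0"
      using gram by (cases \<alpha>; cases \<beta>; cases "dotp n u u"; cases "dotp n v v"; cases "dotp n u v") simp_all
    then show "x \<in> {vzero}"
      by (simp add: x_eq)
  qed
  show "{vzero} \<subseteq> span2 u v \<inter> dual_code n (span2 u v)"
    by (simp add: span2_eq dual_code_def F2vec_def vzero_def dotp_def)
qed

definition indicator_vec :: "nat set \<Rightarrow> nat \<Rightarrow> bit" where
  "indicator_vec S = (\<lambda>i. of_bool (i \<in> S))"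

lemma indicator_vec_eq_vzero_iff: "indicator_vec S = vzero \<longleftrightarrow> S = {}"
  by (auto simp: indicator_vec_def vzero_def fun_eq_iff)

lemma indicator_vec_in_F2vec: "S \<subseteq> {..<n} \<Longrightarrow> indicator_vec S \<in> F2vec n"
  by (auto simp: F2vec_def indicator_vec_def)

lemma vadd_indicator_vec: "vadd (indicator_vec S) (indicator_vec T) = indicator_vec (sym_diff S T)"
  by (auto simp: vadd_def indicator_vec_def fun_eq_iff)

lemma hweight_indicator_vec: "hweight (indicator_vec S) = card S"
  by (simp add: hweight_def indicator_vec_def)

lemma dotp_indicator_vec:
  assumes "S \<subseteq> {..<n}"
  shows "dotp n (indicator_vec S) (indicator_vec T) = of_nat (card (S \<inter> T))"
proof -
  have "dotp n (indicator_vec S) (indicator_vec T) = (\<Sum>i<n. of_bool (i \<in> S \<inter> T))"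
    unfolding dotp_def indicator_vec_def by (rule sum.cong) auto
  also have "\<dots> = of_nat (card ({..<n} \<inter> (S \<inter> T)))"
    by (simp add: Int_def)
  also have "{..<n} \<inter> (S \<inter> T) = S \<inter> T"
    using assms by auto
  finally show ?thesis .
qed

lemma LCD_2_ge_min_pair_sums:
  fixes a b c n :: nat
  assumes "a + b + c \<le> n" "0 < a" "0 < b" "0 < c" "odd (a*b + b*c + c*a)"
  shows "min (a + b) (min (b + c) (a + c)) \<le> LCD n 2"
proof -
  define S where "S = {..<a} \<union> {a+b..<a+b+c}"
  define T where "T = {a..<a+b+c}"
  let ?u = "indicator_vec S" and ?v = "indicator_vec T"
  have ST: "S \<inter> T = {a+b..<a+b+c}" "sym_diff S T = {..<a+b}"
    by (auto simp: S_def T_def)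
  have "card S = a + c"
    unfolding S_def by (subst card_Un_disjoint) auto
  then have cards: "card S = a + c" "card T = b + c" "card (S \<inter> T) = c" "card (sym_diff S T) = a + b"
    unfolding ST by (simp_all add: T_def)
  have sub: "S \<subseteq> {..<n}" "T \<subseteq> {..<n}"
    using assms(1) by (auto simp: S_def T_def)
  then have F2: "?u \<in> F2vec n" "?v \<in> F2vec n"
    by (simp_all add: indicator_vec_in_F2vec)
  have "S \<noteq> {}" "T \<noteq> {}" "sym_diff S T \<noteq> {}"
    using assms(2-4) unfolding ST(2) by (auto simp: S_def T_def)
  then have nonzero: "?u \<noteq> vzero" "?v \<noteq> vzero" "vadd ?u ?v \<noteq> vzero"
    by (simp_all add: indicator_vec_eq_vzero_iff vadd_indicator_vec)
  then have "?u \<noteq> ?v"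
    by (auto simp: vadd_eq_vzero_iff)
  have "span2 ?u ?v - {vzero} = {?u, ?v, vadd ?u ?v}"
    using nonzero by (auto simp: span2_eq)
  then have "min_dist (span2 ?u ?v) = Min (hweight ` {?u, ?v, vadd ?u ?v})"
    by (simp only: min_dist_eq_min_weight[OF linear_code_span2[OF F2]])
  also have "\<dots> = min (a + b) (min (b + c) (a + c))"
    by (simp add: vadd_indicator_vec hweight_indicator_vec cards min.commute min.left_commute)
  finally have min_dist: "min_dist (span2 ?u ?v) = min (a + b) (min (b + c) (a + c))" .
  have "dotp n ?u ?u * dotp n ?v ?v + dotp n ?u ?v = of_nat ((a + c) * (b + c) + c)"
    by (simp only: dotp_indicator_vec sub Int_absorb cards of_nat_mult of_nat_add)
  also have "(a + c) * (b + c) + c = (a*b + b*c + c*a) + c * (c + 1)"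
    by (simp add: algebra_simps)
  also have "(of_nat (a*b + b*c + c*a + c * (c + 1)) :: bit) = 1"
    using assms(5) by (simp add: of_nat_bit_eq_of_bool_odd)
  finally have gram: "dotp n ?u ?u * dotp n ?v ?v + dotp n ?u ?v = 1" .
  then have "LCD_code n 2 (min (a + b) (min (b + c) (a + c))) (span2 ?u ?v)"
    unfolding LCD_code_def
    using linear_code_span2[OF F2] code_dim_span2[OF nonzero(1,2) \<open>?u \<noteq> ?v\<close>] min_dist is_LCD_span2[OF F2 gram]
    by blast
  then show ?thesis
    by (rule LCD_code_le_LCD)
qed

theorem proposition2p2:
  fixes r :: nat
  shows "LCD (6*r+3) 2 \<ge> 4*r+2 \<and> LCD (6*r+4) 2 \<ge> 4*r+2 \<and> LCD (6*r+5) 2 \<ge> 4*r+2 \<and>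
         LCD (6*r+6) 2 \<ge> 4*r+3 \<and> LCD (6*r+7) 2 \<ge> 4*r+4 \<and> LCD (6*r+8) 2 \<ge> 4*r+5"
proof -
  have "4*r+2 \<le> LCD n 2" if "6*r+3 \<le> n" for n
    using that LCD_2_ge_min_pair_sums[of "2*r+1" "2*r+1" "2*r+1" n] by simp
  moreover have "4*r+3 \<le> LCD (6*r+6) 2"
    using LCD_2_ge_min_pair_sums[of "2*r+1" "2*r+2" "2*r+3" "6*r+6"] by simp
  moreover have "4*r+4 \<le> LCD (6*r+7) 2"
    using LCD_2_ge_min_pair_sums[of "2*r+1" "2*r+3" "2*r+3" "6*r+7"] by simp
  moreover have "4*r+5 \<le> LCD (6*r+8) 2"
    using LCD_2_ge_min_pair_sums[of "2*r+2" "2*r+3" "2*r+3" "6*r+8"] by simp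
  ultimately show ?thesis
    by simp
qed

end
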